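(* Let $q$ be a prime power and $e,m$ positive integers with $q=em+1$. Let $a_0=1,a_1,\dots,a_{e-1}\in\mathbb{F}_q^*$ with $a_i\in D_i^e$ for each $i$, and let $M$ be the $e\times e$ matrix with entries $M_{ij}=a_{i-1}^{-1}a_{j-1}$ for $1\le i,j\le e$. Then the $e\times e$ block matrix whose $(i,j)$ block is $C_{M_{ij}}$ is the adjacency matrix of a directed strongly regular graph with parameters $(e(em+1),\ em,\ m,\ m-1,\ m)$.
   Context: Fix a primitive element $\gamma$ of $\mathbb{F}_q$; $D_i^e=\gamma^i\langle\gamma^e\rangle$, $i=0,\dots,e-1$, are the cyclotomic classes of order $e$. For $\sigma\in\mathbb{F}_q^*$, $C_\sigma$ is the $q\times q$ $0$-$1$ matrix with rows and columns indexed by $\mathbb{F}_q$ and $(C_\sigma)_{x,y}=1$ iff $x\in\sigma y+D_0^e$. A directed strongly regular graph with parameters $(v,k,t,\lambda,\mu)$ is a digraph (no loops, no multiple arcs) on $v$ vertices whose adjacency matrix $A$ satisfies $A^2=tI+\lambda A+\mu(J-I-A)$ and $AJ=JA=kJ$. *)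

theory Defs
  imports Main
begin

definition primitive_element :: "'a::{finite,field} \<Rightarrow> bool" where
  "primitive_element \<gamma> \<longleftrightarrow> \<gamma> \<noteq> 0 \<and> (\<forall>x. x \<noteq> 0 \<longrightarrow> (\<exists>k::nat. x = \<gamma> ^ k))"

definition cyclo_class :: "'a::{finite,field} \<Rightarrow> nat \<Rightarrow> nat \<Rightarrow> 'a set" where
  "cyclo_class \<gamma> e i = {\<gamma> ^ i * (\<gamma> ^ e) ^ k | k. True}"

definition C_mat :: "'a::{finite,field} \<Rightarrow> nat \<Rightarrow> 'a \<Rightarrow> 'a \<Rightarrow> 'a \<Rightarrow> int" where
  "C_mat \<gamma> e \<sigma> x y = (if x \<in> {\<sigma> * y + d | d. d \<in> cyclo_class \<gamma> e 0} then 1 else 0)"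

text \<open>The e x e block matrix with (i,j) block C_{M_ij}, M_ij = a_i^{-1} a_j (0-indexed),
  indexed by pairs (block index, field element).\<close>
definition block_adj :: "'a::{finite,field} \<Rightarrow> nat \<Rightarrow> (nat \<Rightarrow> 'a) \<Rightarrow> nat \<times> 'a \<Rightarrow> nat \<times> 'a \<Rightarrow> int" where
  "block_adj \<gamma> e a u w = C_mat \<gamma> e (inverse (a (fst u)) * a (fst w)) (snd u) (snd w)"

definition is_dsrg :: "'v set \<Rightarrow> ('v \<Rightarrow> 'v \<Rightarrow> int) \<Rightarrow> nat \<Rightarrow> nat \<Rightarrow> nat \<Rightarrow> nat \<Rightarrow> nat \<Rightarrow> bool" where
  "is_dsrg V A v k t lam mu \<longleftrightarrow>
     finite V \<and> card V = v \<and>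
     (\<forall>x\<in>V. \<forall>y\<in>V. A x y = 0 \<or> A x y = 1) \<and>
     (\<forall>x\<in>V. A x x = 0) \<and>
     (\<forall>x\<in>V. \<forall>y\<in>V.
        (\<Sum>z\<in>V. A x z * A z y) =
          int t * (if x = y then 1 else 0) + int lam * A x y
          + int mu * (1 - (if x = y then 1 else 0) - A x y)) \<and>
     (\<forall>x\<in>V. (\<Sum>y\<in>V. A x y) = int k) \<and>
     (\<forall>y\<in>V. (\<Sum>x\<in>V. A x y) = int k)"

end

theory Submission
  imports Defs
begin

text \<open>Put \<open>D = D\<^sub>0\<^sup>e\<close>. The block matrix has entry \<open>[x - a\<^sub>i\<^sup>-\<^sup>1 a\<^sub>j y \<in> D]\<close> at
  \<open>((i,x),(j,y))\<close>, and the only property of \<open>D\<close> that matters is that the cosets \<open>a\<^sub>k D\<close>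
  (\<open>k < e\<close>) partition \<open>\<bbbF>\<^sub>q\<^sup>*\<close>. Every block then has \<open>|D| = m\<close> ones in each row and
  column. In the square of the matrix the substitution \<open>w = a\<^sub>k z\<close> turns the \<open>((i,x),(j,y))\<close>
  entry into \<open>\<Sum>\<^sub>w [x - a\<^sub>i\<^sup>-\<^sup>1 w \<in> D] \<cdot> #{k. a\<^sub>k\<^sup>-\<^sup>1 (w - a\<^sub>j y) \<in> D}\<close>, and the count is
  \<open>1\<close> exactly when \<open>w \<noteq> a\<^sub>j y\<close>. Hence \<open>A\<^sup>2 = mJ - A\<close>, which is the defining equation with
  \<open>t = m\<close>, \<open>\<lambda> = m - 1\<close>, \<open>\<mu> = m\<close>.\<close>

lemma power_card_minus_one_eq_one:
  fixes x :: "'a::{finite,field}"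
  assumes "x \<noteq> 0"
  shows "x ^ (card (UNIV :: 'a set) - 1) = 1"
proof -
  have "(\<Prod>y\<in>UNIV-{0}. x * y) = x ^ (card (UNIV :: 'a set) - 1) * (\<Prod>y\<in>UNIV-{0::'a}. y)"
    by (simp add: prod.distrib card_Diff_singleton)
  moreover have "(\<Prod>y\<in>UNIV-{0}. x * y) = (\<Prod>y\<in>UNIV-{0::'a}. y)"
    by (rule prod.reindex_bij_witness[of _ "\<lambda>y. y / x" "\<lambda>y. x * y"]) (use assms in auto)
  moreover have "(\<Prod>y\<in>UNIV-{0::'a}. y) \<noteq> 0" by simp
  ultimately show ?thesis by simp
qed

lemma card_UNIV_field_ge_two: "card (UNIV :: 'a::{finite,field} set) \<ge> 2"
proof -
  have "card {0::'a, 1} \<le> card (UNIV :: 'a set)" by (rule card_mono) auto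
  then show ?thesis by simp
qed

lemma primitive_element_nonzero: "primitive_element \<gamma> \<Longrightarrow> \<gamma> \<noteq> 0"
  by (simp add: primitive_element_def)

lemma primitive_element_card_minus_one_le_period:
  fixes \<gamma> :: "'a::{finite,field}"
  assumes "primitive_element \<gamma>" and "\<gamma> ^ p = 1" and "p > 0"
  shows "card (UNIV :: 'a set) - 1 \<le> p"
proof -
  have "UNIV - {0} \<subseteq> (\<lambda>n. \<gamma> ^ n) ` {..<p}"
  proof
    fix x :: 'a assume "x \<in> UNIV - {0}"
    then obtain k where "x = \<gamma> ^ k" using assms(1) unfolding primitive_element_def by auto
    also have "\<gamma> ^ k = (\<gamma> ^ p) ^ (k div p) * \<gamma> ^ (k mod p)"
      by (metis div_mult_mod_eq power_add power_mult mult.commute)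
    finally show "x \<in> (\<lambda>n. \<gamma> ^ n) ` {..<p}" using assms(2,3) by auto
  qed
  then have "card (UNIV - {0::'a}) \<le> card ((\<lambda>n. \<gamma> ^ n) ` {..<p})"
    by (intro card_mono) auto
  also have "\<dots> \<le> p" using card_image_le[of "{..<p}"] by simp
  finally show ?thesis by (simp add: card_Diff_singleton)
qed

lemma primitive_element_power_eq_iff:
  fixes \<gamma> :: "'a::{finite,field}"
  assumes "primitive_element \<gamma>"
  shows "\<gamma> ^ i = \<gamma> ^ j \<longleftrightarrow> i mod (card (UNIV :: 'a set) - 1) = j mod (card (UNIV :: 'a set) - 1)"
proof -
  let ?N = "card (UNIV :: 'a set) - 1"
  have reduce: "\<gamma> ^ n = \<gamma> ^ (n mod ?N)" for n
  proof -
    have "\<gamma> ^ n = (\<gamma> ^ ?N) ^ (n div ?N) * \<gamma> ^ (n mod ?N)"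
      by (metis div_mult_mod_eq power_add power_mult mult.commute)
    then show ?thesis
      using power_card_minus_one_eq_one[OF primitive_element_nonzero[OF assms]] by simp
  qed
  have eq_if_less: "i' = j'" if "\<gamma> ^ i' = \<gamma> ^ j'" "i' \<le> j'" "j' < ?N" for i' j'
  proof (rule ccontr)
    assume "i' \<noteq> j'"
    have "\<gamma> ^ j' = \<gamma> ^ i' * \<gamma> ^ (j' - i')" using that(2) by (simp flip: power_add)
    then have "\<gamma> ^ (j' - i') = 1"
      using that(1) primitive_element_nonzero[OF assms] by simp
    from primitive_element_card_minus_one_le_period[OF assms this] \<open>i' \<noteq> j'\<close> that(2,3)
    show False by simp
  qed
  have "?N > 0" using card_UNIV_field_ge_two[where 'a='a] by simp
  then have "\<gamma> ^ (i mod ?N) = \<gamma> ^ (j mod ?N) \<Longrightarrow> i mod ?N = j mod ?N"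
    using eq_if_less by (metis mod_less_divisor nat_le_linear)
  then show ?thesis using reduce by metis
qed

lemma zero_notin_cyclo_class: "\<gamma> \<noteq> 0 \<Longrightarrow> 0 \<notin> cyclo_class \<gamma> e i"
  by (auto simp: cyclo_class_def)

lemma cyclo_class_eq: "cyclo_class \<gamma> e i = {\<gamma> ^ (i + e * k) | k. True}"
  by (simp add: cyclo_class_def power_add power_mult)

lemma power_mem_cyclo_class_iff:
  fixes \<gamma> :: "'a::{finite,field}"
  assumes "primitive_element \<gamma>" and "e dvd card (UNIV :: 'a set) - 1"
  shows "\<gamma> ^ n \<in> cyclo_class \<gamma> e i \<longleftrightarrow> n mod e = i mod e"
proof -
  let ?N = "card (UNIV :: 'a set) - 1"
  have "\<gamma> ^ n \<in> cyclo_class \<gamma> e i \<longleftrightarrow> (\<exists>k. n mod ?N = (i + e * k) mod ?N)"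
    by (auto simp: cyclo_class_eq primitive_element_power_eq_iff[OF assms(1)])
  also have "\<dots> \<longleftrightarrow> n mod e = i mod e"
  proof
    assume "\<exists>k. n mod ?N = (i + e * k) mod ?N"
    then obtain k where "n mod ?N = (i + e * k) mod ?N" ..
    then have "n mod ?N mod e = (i + e * k) mod ?N mod e" by simp
    then show "n mod e = i mod e" using assms(2) by (simp add: mod_mod_cancel)
  next
    assume same_class: "n mod e = i mod e"
    obtain d where d: "?N = e * d" using assms(2) ..
    have "d > 0" using d card_UNIV_field_ge_two[where 'a='a] by (cases d) auto
    then have "e * (i div e) + e * ((d - 1) * (i div e)) = ?N * (i div e)"
      using d by (cases d) (simp_all add: algebra_simps)
    then have "i + e * (n div e + (d - 1) * (i div e)) = n + ?N * (i div e)"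
      using same_class mult_div_mod_eq[of e i] mult_div_mod_eq[of e n]
      unfolding distrib_left by linarith
    then show "\<exists>k. n mod ?N = (i + e * k) mod ?N" by (metis mod_mult_self2)
  qed
  finally show ?thesis .
qed

lemma card_cyclo_class_zero:
  fixes \<gamma> :: "'a::{finite,field}"
  assumes "primitive_element \<gamma>" and "e dvd card (UNIV :: 'a set) - 1"
  shows "card (cyclo_class \<gamma> e 0) = (card (UNIV :: 'a set) - 1) div e"
proof -
  let ?N = "card (UNIV :: 'a set) - 1"
  obtain d where d: "?N = e * d" using assms(2) ..
  have "e > 0" using d card_UNIV_field_ge_two[where 'a='a] by (cases e) auto
  have pow_eq: "\<gamma> ^ (e * k) = \<gamma> ^ (e * l) \<longleftrightarrow> k mod d = l mod d" for k l
    unfolding primitive_element_power_eq_iff[OF assms(1)] d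
    using \<open>e > 0\<close> by (simp add: mod_mult_mult1)
  have "cyclo_class \<gamma> e 0 = (\<lambda>k. \<gamma> ^ (e * k)) ` {..<d}"
  proof (intro set_eqI iffI)
    fix x assume "x \<in> cyclo_class \<gamma> e 0"
    then obtain k where "x = \<gamma> ^ (e * k)" by (auto simp: cyclo_class_def power_mult)
    then have "x = \<gamma> ^ (e * (k mod d))" using pow_eq by simp
    moreover have "d > 0" using d card_UNIV_field_ge_two[where 'a='a] by (cases d) auto
    ultimately show "x \<in> (\<lambda>k. \<gamma> ^ (e * k)) ` {..<d}" by auto
  qed (auto simp: cyclo_class_def power_mult)
  moreover have "inj_on (\<lambda>k. \<gamma> ^ (e * k)) {..<d}"
    by (auto intro!: inj_onI simp: pow_eq)
  ultimately show ?thesis using d \<open>e > 0\<close> by (simp add: card_image)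
qed

lemma mult_mem_cyclo_class_iff:
  fixes \<gamma> :: "'a::{finite,field}"
  assumes "primitive_element \<gamma>" and "e dvd card (UNIV :: 'a set) - 1"
    and "x \<in> cyclo_class \<gamma> e i" and "y \<noteq> 0"
  shows "x * y \<in> cyclo_class \<gamma> e (i + j) \<longleftrightarrow> y \<in> cyclo_class \<gamma> e j"
proof -
  obtain s where x: "x = \<gamma> ^ (i + e * s)" using assms(3) by (auto simp: cyclo_class_eq)
  obtain n where y: "y = \<gamma> ^ n" using assms(1,4) by (auto simp: primitive_element_def)
  have "x * y = \<gamma> ^ ((n + i) + e * s)" by (simp add: x y ac_simps flip: power_add)
  moreover have "(n + i) mod e = (j + i) mod e \<longleftrightarrow> n mod e = j mod e"
    by (simp add: nat_mod_eq_iff)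
  ultimately show ?thesis
    using power_mem_cyclo_class_iff[OF assms(1,2)] by (simp add: y add.commute[of i])
qed

lemma ex1_cyclo_class_coset:
  fixes \<gamma> :: "'a::{finite,field}"
  assumes "primitive_element \<gamma>" and "e dvd card (UNIV :: 'a set) - 1"
    and "\<forall>k<e. a k \<in> cyclo_class \<gamma> e k" and "t \<noteq> 0"
  shows "\<exists>!k. k < e \<and> inverse (a k) * t \<in> cyclo_class \<gamma> e 0"
proof -
  have "e > 0" using assms(2) card_UNIV_field_ge_two[where 'a='a] by (cases e) auto
  obtain n where t: "t = \<gamma> ^ n" using assms(1,4) by (auto simp: primitive_element_def)
  have coset_iff: "inverse (a k) * t \<in> cyclo_class \<gamma> e 0 \<longleftrightarrow> k = n mod e" if "k < e" for k
  proof -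
    have ak: "a k \<in> cyclo_class \<gamma> e k" using assms(3) that by blast
    then have "a k \<noteq> 0"
      using zero_notin_cyclo_class[OF primitive_element_nonzero[OF assms(1)]] by auto
    then have cancel: "a k * (inverse (a k) * t) = t" and "inverse (a k) * t \<noteq> 0"
      using assms(4) by simp_all
    then have "inverse (a k) * t \<in> cyclo_class \<gamma> e 0 \<longleftrightarrow> t \<in> cyclo_class \<gamma> e k"
      using mult_mem_cyclo_class_iff[OF assms(1,2) ak, of "inverse (a k) * t" 0]
      unfolding cancel by simp
    also have "\<dots> \<longleftrightarrow> k = n mod e"
      using power_mem_cyclo_class_iff[OF assms(1,2)] that by (auto simp: t)
    finally show ?thesis .
  qed
  show ?thesis
    by (rule ex1I[of _ "n mod e"]) (use coset_iff \<open>e > 0\<close> in auto)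
qed

lemma sum_affine_reindex:
  fixes g :: "'a::field \<Rightarrow> 'b::comm_monoid_add"
  assumes "\<sigma> \<noteq> 0"
  shows "(\<Sum>z\<in>UNIV. g (\<sigma> * z + c)) = sum g UNIV"
  by (rule sum.reindex_bij_witness[of _ "\<lambda>y. (y - c) / \<sigma>" "\<lambda>z. \<sigma> * z + c"])
    (use assms in auto)

lemma card_affine_preimage:
  fixes D :: "'a::field set"
  assumes "\<sigma> \<noteq> 0"
  shows "card {z. \<sigma> * z + c \<in> D} = card D"
proof (rule bij_betw_same_card)
  show "bij_betw (\<lambda>z. \<sigma> * z + c) {z. \<sigma> * z + c \<in> D} D"
    by (rule bij_betw_byWitness[where f' = "\<lambda>y. (y - c) / \<sigma>"]) (use assms in auto)
qed

definition coset_block_matrix :: "'a::field set \<Rightarrow> (nat \<Rightarrow> 'a) \<Rightarrow> nat \<times> 'a \<Rightarrow> nat \<times> 'a \<Rightarrow> int"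
  where "coset_block_matrix D b u w =
    of_bool (snd u - inverse (b (fst u)) * b (fst w) * snd w \<in> D)"

lemma coset_block_matrix_Pair:
  "coset_block_matrix D b (i, x) (j, y) = of_bool (x - inverse (b i) * b j * y \<in> D)"
  by (simp add: coset_block_matrix_def)

lemma block_adj_eq_coset_block_matrix:
  "block_adj \<gamma> e a = coset_block_matrix (cyclo_class \<gamma> e 0) a"
proof (intro ext)
  have "x \<in> {\<sigma> * y + d | d. d \<in> D} \<longleftrightarrow> x - \<sigma> * y \<in> D" for x y \<sigma> :: 'a and D
    by (auto simp: algebra_simps) (metis add_diff_cancel_left' diff_add_cancel)
  then show "block_adj \<gamma> e a u w = coset_block_matrix (cyclo_class \<gamma> e 0) a u w" for u w
    by (simp add: block_adj_def C_mat_def coset_block_matrix_def mult.assoc)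
qed

locale coset_partition =
  fixes D :: "'a::{finite,field} set" and e :: nat and b :: "nat \<Rightarrow> 'a"
  assumes zero_notin: "0 \<notin> D"
    and nonzero: "k < e \<Longrightarrow> b k \<noteq> 0"
    and ex1_coset: "t \<noteq> 0 \<Longrightarrow> \<exists>!k. k < e \<and> inverse (b k) * t \<in> D"
begin

abbreviation "A \<equiv> coset_block_matrix D b"

lemma card_cosets_containing: "card {k. k < e \<and> inverse (b k) * t \<in> D} = of_bool (t \<noteq> 0)"
proof (cases "t = 0")
  case False
  then obtain k where "k < e \<and> inverse (b k) * t \<in> D"
    and "\<And>l. l < e \<and> inverse (b l) * t \<in> D \<Longrightarrow> l = k"
    using ex1_coset by metis
  then have "{k. k < e \<and> inverse (b k) * t \<in> D} = {k}" by blast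
  then show ?thesis using False by simp
qed (simp add: zero_notin)

lemma row_sum:
  assumes "i < e"
  shows "(\<Sum>w\<in>{0..<e} \<times> UNIV. A (i, x) w) = int (e * card D)"
proof -
  have "(\<Sum>y\<in>UNIV. A (i, x) (j, y)) = int (card D)" if "j < e" for j
  proof -
    have "- (inverse (b i) * b j) \<noteq> 0" using nonzero assms that by simp
    from card_affine_preimage[OF this, of x D] show ?thesis
      by (simp add: coset_block_matrix_Pair algebra_simps)
  qed
  then show ?thesis by (simp add: sum.cartesian_product')
qed

lemma col_sum: "(\<Sum>u\<in>{0..<e} \<times> UNIV. A u (j, y)) = int (e * card D)"
proof -
  have "(\<Sum>x\<in>UNIV. A (i, x) (j, y)) = int (card D)" for i
    using card_affine_preimage[of 1 "- (inverse (b i) * b j * y)" D]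
    by (simp add: coset_block_matrix_Pair)
  then show ?thesis by (simp add: sum.cartesian_product')
qed

lemma square_entry:
  assumes "i < e"
  shows "(\<Sum>z\<in>{0..<e} \<times> UNIV. A (i, x) z * A z (j, y)) = int (card D) - A (i, x) (j, y)"
proof -
  define P where "P w = (of_bool (x - inverse (b i) * w \<in> D) :: int)" for w
  define Q where "Q k w = (of_bool (inverse (b k) * (w - b j * y) \<in> D) :: int)" for k w
  have substitute: "(\<Sum>z\<in>UNIV. A (i, x) (k, z) * A (k, z) (j, y)) = (\<Sum>w\<in>UNIV. P w * Q k w)"
    if "k < e" for k
  proof -
    have bk: "b k \<noteq> 0" using nonzero that .
    have "(\<Sum>z\<in>UNIV. A (i, x) (k, z) * A (k, z) (j, y))
        = (\<Sum>w\<in>UNIV. A (i, x) (k, inverse (b k) * w + 0) * A (k, inverse (b k) * w + 0) (j, y))"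
      using sum_affine_reindex[of "inverse (b k)" "\<lambda>z. A (i, x) (k, z) * A (k, z) (j, y)" 0] bk
      by simp
    also have "\<dots> = (\<Sum>w\<in>UNIV. P w * Q k w)"
    proof (intro sum.cong refl)
      fix w
      have "inverse (b i) * b k * (inverse (b k) * w) = inverse (b i) * w"
        and "inverse (b k) * w - inverse (b k) * b j * y = inverse (b k) * (w - b j * y)"
        using bk by (simp_all add: field_simps)
      then show "A (i, x) (k, inverse (b k) * w + 0) * A (k, inverse (b k) * w + 0) (j, y)
          = P w * Q k w"
        by (simp only: coset_block_matrix_Pair P_def Q_def add_0_right)
    qed
    finally show ?thesis .
  qed
  have "(\<Sum>z\<in>{0..<e} \<times> UNIV. A (i, x) z * A z (j, y)) = (\<Sum>k\<in>{0..<e}. \<Sum>w\<in>UNIV. P w * Q k w)"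
    by (simp add: sum.cartesian_product' substitute)
  also have "\<dots> = (\<Sum>w\<in>UNIV. P w * (\<Sum>k\<in>{0..<e}. Q k w))"
    by (simp add: sum.swap[of _ "{0..<e}"] sum_distrib_left)
  also have "\<dots> = (\<Sum>w\<in>UNIV. P w * of_bool (w \<noteq> b j * y))"
  proof -
    have "(\<Sum>k\<in>{0..<e}. Q k w) = of_bool (w - b j * y \<noteq> 0)" for w
      using card_cosets_containing[of "w - b j * y"]
      by (simp add: Q_def Int_def conj_commute)
    then show ?thesis by simp
  qed
  also have "\<dots> = (\<Sum>w\<in>UNIV. P w) - P (b j * y)"
  proof -
    have "{w. w \<noteq> b j * y} = UNIV - {b j * y}" by auto
    then show ?thesis by (simp add: sum_diff1)
  qed
  also have "(\<Sum>w\<in>UNIV. P w) = int (card D)"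
    using card_affine_preimage[of "- inverse (b i)" x D] nonzero[OF assms]
    by (simp add: P_def)
  also have "P (b j * y) = A (i, x) (j, y)"
    by (simp add: P_def coset_block_matrix_Pair mult.assoc)
  finally show ?thesis .
qed

lemma diagonal_zero: "i < e \<Longrightarrow> A (i, x) (i, x) = 0"
  using zero_notin nonzero by (simp add: coset_block_matrix_Pair)

lemma is_dsrg_coset_block_matrix:
  "is_dsrg ({0..<e} \<times> UNIV) A
     (e * card (UNIV :: 'a set)) (e * card D) (card D) (card D - 1) (card D)"
  unfolding is_dsrg_def
proof (intro conjI ballI)
  show "card ({0..<e} \<times> (UNIV :: 'a set)) = e * card (UNIV :: 'a set)"
    by (simp add: card_cartesian_product)
  fix u w :: "nat \<times> 'a"
  assume "u \<in> {0..<e} \<times> UNIV" and "w \<in> {0..<e} \<times> UNIV"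
  then obtain i x j y where u: "u = (i, x)" "i < e" and w: "w = (j, y)" by auto
  show "A u w = 0 \<or> A u w = 1" by (simp add: u w coset_block_matrix_Pair)
  show "(\<Sum>z\<in>{0..<e} \<times> UNIV. A u z * A z w) =
    int (card D) * (if u = w then 1 else 0) + int (card D - 1) * A u w
    + int (card D) * (1 - (if u = w then 1 else 0) - A u w)"
  proof (cases "A u w = 1")
    case True
    then have "D \<noteq> {}" by (auto simp: u w coset_block_matrix_Pair)
    then have "int (card D - 1) = int (card D) - 1" by (simp add: card_gt_0_iff Suc_le_eq)
    with True show ?thesis using diagonal_zero u w square_entry by auto
  next
    case False
    then have "A u w = 0" by (simp add: u w coset_block_matrix_Pair)
    then show ?thesis using diagonal_zero u w square_entry by auto
  qed
qed (auto simp: diagonal_zero row_sum col_sum)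

end

theorem mainTheorem11:
  fixes \<gamma> :: "'a::{finite,field}" and e m :: nat and a :: "nat \<Rightarrow> 'a"
  assumes "primitive_element \<gamma>"
    and "e > 0" and "m > 0"
    and "card (UNIV :: 'a set) = e * m + 1"
    and "a 0 = 1"
    and "\<forall>i<e. a i \<in> cyclo_class \<gamma> e i"
  shows "is_dsrg ({0..<e} \<times> (UNIV :: 'a set)) (block_adj \<gamma> e a)
           (e * (e * m + 1)) (e * m) m (m - 1) m"
proof -
  have dvd: "e dvd card (UNIV :: 'a set) - 1" using assms(4) by simp
  have zero_notin: "0 \<notin> cyclo_class \<gamma> e i" for i
    using zero_notin_cyclo_class[OF primitive_element_nonzero[OF assms(1)]] .
  interpret coset_partition "cyclo_class \<gamma> e 0" e a
  proof
    show "k < e \<Longrightarrow> a k \<noteq> 0" for k using assms(6) zero_notin by metis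
  qed (use zero_notin ex1_cyclo_class_coset[OF assms(1) dvd assms(6)] in auto)
  have "card (cyclo_class \<gamma> e 0) = m"
    using card_cyclo_class_zero[OF assms(1) dvd] assms(2,4) by simp
  then show ?thesis
    using is_dsrg_coset_block_matrix assms(4)
    by (simp add: block_adj_eq_coset_block_matrix)
qed

end
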